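(* In the non-exceptional case, for every integer $s$ the tuples $u=(u_1,\dots,u_{2r})$ and $v=v(s)=(v_1,\dots,v_{2r})$ defined by $$u_{2\rho-1}:=\check\mu_{a_{j_\rho}},\quad u_{2\rho}:=\check\mu_{1+a_{j_\rho}},\quad v_{2\rho-1}:=\lambda_{1+j_{\rho-1}}-s,\quad v_{2\rho}:=\lambda_{j_\rho}-s\qquad(\rho=1,\dots,r)$$ belong to $X_0^+(2r)$, with $u_i+u_{2r+1-i}=-w$ and $v_i+v_{2r+1-i}=w'+n-m-1-2s$ for all $i$.
   Context: Let $n,m\ge1$, not both $1$, and not both odd (non-exceptional case). For $N\ge1$: $L_0^+(N):=\{(w,l)\in\mathbb Z\times\mathbb Z^N:\ l_1>\dots>l_N,\ l_i+l_{N+1-i}=0,\ w+l_i\equiv N+1 \bmod 2\}$; $X^+(N):=\{x\in\mathbb Z^N:x_1\ge\dots\ge x_N\}$; $X_0^+(N):=\{x\in X^+(N):x_i+x_{N+1-i}\text{ independent of } i\}$. Bijection $L_0^+(N)\to X_0^+(N)$: $(w,l)\mapsto\mu$, $\mu_i=\frac{w+l_i+2i-1-N}{2}$; inverse $w=\mu_1+\mu_N$, $l_i=2\mu_i+N+1-w-2i$. Let $\mu\in X_0^+(n)$, $\nu\in X_0^+(m)$ correspond to $(w,l)$, $(w',l')$; $\check\mu_i:=-\mu_{n+1-i}$. Standing assumptions: $l_1>l'_1$ and $l_i\neq l'_j$ for all $i,j$. Position tuple: $a_j\in\{1,\dots,n-1\}$ unique with $l_{a_j}>l'_j\ge l_{1+a_j}$.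 Jump indices: $j\in\{1,\dots,m-1\}$ with $a_j<a_{j+1}$, listed $j_1<\dots<j_k$; $j_0:=0$, $j_{k+1}:=m$, $r:=k+1$. $\lambda_j:=\nu_j+a_j-j$. *)

theory Defs
  imports Main
begin

text \<open>Tuples x = (x_1,...,x_N) are functions nat => int, only indices 1..N matter.\<close>

definition X_plus :: "nat \<Rightarrow> (nat \<Rightarrow> int) \<Rightarrow> bool" where
  "X_plus N x \<longleftrightarrow> (\<forall>i j. 1 \<le> i \<and> i \<le> j \<and> j \<le> N \<longrightarrow> x j \<le> x i)"

definition X0_plus :: "nat \<Rightarrow> (nat \<Rightarrow> int) \<Rightarrow> bool" where
  "X0_plus N x \<longleftrightarrow> X_plus N x \<and> (\<exists>c. \<forall>i\<in>{1..N}. x i + x (N + 1 - i) = c)"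

text \<open>Inverse of the bijection L_0^+(N) -> X_0^+(N): w = mu_1 + mu_N,
  l_i = 2 mu_i + N + 1 - w - 2i.\<close>

definition wt :: "nat \<Rightarrow> (nat \<Rightarrow> int) \<Rightarrow> int" where
  "wt N mu = mu 1 + mu N"

definition lt :: "nat \<Rightarrow> (nat \<Rightarrow> int) \<Rightarrow> nat \<Rightarrow> int" where
  "lt N mu i = 2 * mu i + int N + 1 - wt N mu - 2 * int i"

definition checkv :: "nat \<Rightarrow> (nat \<Rightarrow> int) \<Rightarrow> nat \<Rightarrow> int" where
  "checkv N mu i = - mu (N + 1 - i)"

definition pos :: "nat \<Rightarrow> (nat \<Rightarrow> int) \<Rightarrow> (nat \<Rightarrow> int) \<Rightarrow> nat \<Rightarrow> nat" where
  "pos n l l' j = (THE a. a \<in> {1..n-1} \<and> l a > l' j \<and> l' j \<ge> l (1 + a))"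

definition jumps :: "nat \<Rightarrow> (nat \<Rightarrow> nat) \<Rightarrow> nat list" where
  "jumps m a = filter (\<lambda>j. a j < a (j + 1)) [1..<m]"

definition jidx :: "nat \<Rightarrow> (nat \<Rightarrow> nat) \<Rightarrow> nat \<Rightarrow> nat" where
  "jidx m a rho = (if rho = 0 then 0
                   else if rho \<le> length (jumps m a) then jumps m a ! (rho - 1)
                   else m)"

definition lam :: "(nat \<Rightarrow> int) \<Rightarrow> (nat \<Rightarrow> nat) \<Rightarrow> nat \<Rightarrow> int" where
  "lam nu a j = nu j + int (a j) - int j"

end

theory Submission
  imports Defs
begin

text \<open>
  Let l and l' be the l-vectors of mu and nu. Both are strictly decreasing and antisymmetric
  (l_i + l_{N+1-i} = 0), so l_1 > l'_1 forces every l'_j strictly between l_n and l_1, and the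
  position a_j exists. It is monotone in j and satisfies a_{m+1-j} = n - a_j; hence the set of
  jumps of a is symmetric under j \<mapsto> m - j and a is constant between consecutive jumps.
  These two facts produce the reflection identities for u and v. Monotonicity of u is that of
  check-mu, using that a increases at every jump; monotonicity of v is that of lambda.
\<close>

lemma X_plusI_step:
  assumes "\<And>i. 1 \<le> i \<Longrightarrow> i < N \<Longrightarrow> x (Suc i) \<le> x i"
  shows "X_plus N x"
  unfolding X_plus_def
proof (intro allI impI, elim conjE)
  fix i j :: nat
  assume "1 \<le> i" "i \<le> j" "j \<le> N"
  from \<open>i \<le> j\<close> \<open>j \<le> N\<close> show "x j \<le> x i"
  proof (induction j rule: dec_induct)
    case (step j)
    then show ?case using assms[of j] \<open>1 \<le> i\<close> by simp
  qed simp
qed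

lemma X_plusD: "X_plus N x \<Longrightarrow> 1 \<le> i \<Longrightarrow> i \<le> j \<Longrightarrow> j \<le> N \<Longrightarrow> x j \<le> x i"
  unfolding X_plus_def by blast

lemma X0_plus_reflect:
  assumes "X0_plus N x" "i \<in> {1..N}"
  shows "x i + x (N + 1 - i) = wt N x"
proof -
  obtain c where c: "\<forall>i\<in>{1..N}. x i + x (N + 1 - i) = c"
    using assms(1) unfolding X0_plus_def by blast
  with assms(2) have "x 1 + x N = c" by force
  with c assms(2) show ?thesis unfolding wt_def by simp
qed

lemma pair_index_cases:
  fixes i r :: nat
  assumes "i \<in> {1..2*r}"
  obtains (odd) \<rho> where "\<rho> \<in> {1..r}" "i = 2*\<rho> - 1"
    | (even) \<rho> where "\<rho> \<in> {1..r}" "i = 2*\<rho>"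
proof (cases "even i")
  case True
  then show ?thesis using assms even[of "i div 2"] by auto
next
  case False
  then show ?thesis using assms odd[of "(i + 1) div 2"] by (auto elim!: oddE)
qed

lemma reflect_by_pairs:
  fixes r :: nat and x :: "nat \<Rightarrow> 'a::ab_semigroup_add"
  assumes "\<And>\<rho>. \<rho> \<in> {1..r} \<Longrightarrow> x (2*\<rho> - 1) + x (2*(r + 1 - \<rho>)) = c"
  shows "\<forall>i\<in>{1..2*r}. x i + x (2*r + 1 - i) = c"
proof
  fix i assume "i \<in> {1..2*r}"
  then show "x i + x (2*r + 1 - i) = c"
  proof (cases rule: pair_index_cases)
    case (odd \<rho>)
    moreover have "2*r + 1 - i = 2*(r + 1 - \<rho>)" using odd by auto
    ultimately show ?thesis using assms[of \<rho>] by simp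
  next
    case (even \<rho>)
    then have "x (2*(r + 1 - \<rho>) - 1) + x (2*(r + 1 - (r + 1 - \<rho>))) = c"
      by (intro assms) auto
    moreover have "2*(r + 1 - \<rho>) - 1 = 2*r + 1 - i" "r + 1 - (r + 1 - \<rho>) = \<rho>"
      using even by auto
    ultimately show ?thesis using even by (simp add: add.commute)
  qed
qed

lemma X_plus_by_pairs:
  fixes r :: nat
  assumes "\<And>\<rho>. \<rho> \<in> {1..r} \<Longrightarrow> x (2*\<rho>) \<le> x (2*\<rho> - 1)"
    and "\<And>\<rho>. 1 \<le> \<rho> \<Longrightarrow> \<rho> < r \<Longrightarrow> x (2*\<rho> + 1) \<le> x (2*\<rho>)"
  shows "X_plus (2*r) x"
proof (rule X_plusI_step)
  fix i assume i: "1 \<le> i" "i < 2*r"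
  then have "i \<in> {1..2*r}" by simp
  then show "x (Suc i) \<le> x i"
  proof (cases rule: pair_index_cases)
    case (odd \<rho>)
    then show ?thesis using assms(1)[of \<rho>] by (simp add: Suc_diff_Suc)
  next
    case (even \<rho>)
    then show ?thesis using assms(2)[of \<rho>] i by simp
  qed
qed

lemma lt_diff_ge:
  assumes "X_plus N mu" "1 \<le> i" "i \<le> j" "j \<le> N"
  shows "lt N mu i - lt N mu j \<ge> 2 * (int j - int i)"
  using X_plusD[OF assms] unfolding lt_def by simp

lemma lt_strict_antimono:
  assumes "X_plus N mu"
  shows "strict_antimono_on {1..N} (lt N mu)"
proof (rule monotone_onI)
  fix i j assume "i \<in> {1..N}" "j \<in> {1..N}" "i < j"
  with lt_diff_ge[OF assms, of i j] show "lt N mu j < lt N mu i" by simp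
qed

lemma lt_reflect:
  assumes "X0_plus N mu" "i \<in> {1..N}"
  shows "lt N mu (N + 1 - i) = - lt N mu i"
proof -
  have "int (N + 1 - i) = int N + 1 - int i" using assms(2) by auto
  with X0_plus_reflect[OF assms] show ?thesis unfolding lt_def wt_def by simp
qed

lemma checkv_antimono:
  assumes "X_plus N mu" "1 \<le> i" "i \<le> j" "j \<le> N"
  shows "checkv N mu j \<le> checkv N mu i"
  using X_plusD[OF assms(1), of "N + 1 - j" "N + 1 - i"] assms(2-4)
  unfolding checkv_def by simp

lemma checkv_reflect:
  assumes "X0_plus N mu" "i \<in> {1..N}"
  shows "checkv N mu i + checkv N mu (N + 1 - i) = - wt N mu"
  using X0_plus_reflect[OF assms] assms(2) unfolding checkv_def by simp

lemma pos_unique: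
  fixes l :: "nat \<Rightarrow> int"
  assumes "strict_antimono_on {1..n} l"
    and "b \<in> {1..n-1}" "y < l b" "l (1 + b) \<le> y"
    and "b' \<in> {1..n-1}" "y < l b'" "l (1 + b') \<le> y"
  shows "b = b'"
proof -
  have "l c \<le> l (1 + b)" if "b \<in> {1..n-1}" "c \<in> {1..n-1}" "b < c" for b c
  proof (cases "c = 1 + b")
    case False
    with that have "l c < l (1 + b)" by (intro monotone_onD[OF assms(1)]) auto
    then show ?thesis by simp
  qed simp
  with assms(2-) show ?thesis by (metis linorder_neqE_nat not_less order_le_less_trans)
qed

lemma pos_eq:
  fixes l l' :: "nat \<Rightarrow> int"
  assumes "strict_antimono_on {1..n} l"
    and "b \<in> {1..n-1}" "l' j < l b" "l (1 + b) \<le> l' j"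
  shows "pos n l l' j = b"
  unfolding pos_def
  by (rule the_equality) (use assms pos_unique[OF assms(1)] in blast)+

lemma pos_spec:
  fixes l l' :: "nat \<Rightarrow> int"
  assumes "strict_antimono_on {1..n} l" "1 \<le> n" "l' j < l 1" "l n \<le> l' j"
  shows "pos n l l' j \<in> {1..n-1} \<and> l' j < l (pos n l l' j) \<and> l (1 + pos n l l' j) \<le> l' j"
proof -
  define S where "S = {b \<in> {1..n}. l' j < l b}"
  define b where "b = Max S"
  have "b \<in> S" unfolding b_def S_def using assms(2,3) by (intro Max_in) auto
  then have b: "1 \<le> b" "b < n" "l' j < l b"
    using assms(4) unfolding S_def by (auto simp: le_less)
  have "finite S" unfolding S_def by simp
  then have "1 + b \<notin> S" using Max_ge[of S "1 + b"] unfolding b_def[symmetric] by auto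
  with b have "l (1 + b) \<le> l' j" unfolding S_def by auto
  moreover have "pos n l l' j = b" by (rule pos_eq) (use assms(1) b \<open>l (1 + b) \<le> l' j\<close> in auto)
  ultimately show ?thesis using b by auto
qed

lemma set_jumps: "set (jumps m a) = {j. 1 \<le> j \<and> j < m \<and> a j < a (Suc j)}"
  unfolding jumps_def by auto

lemma sorted_jumps: "sorted_wrt (<) (jumps m a)"
  unfolding jumps_def by (rule sorted_wrt_filter) simp

lemma jidx_in_jumps:
  assumes "t \<in> {1..length (jumps m a)}"
  shows "jidx m a t \<in> set (jumps m a)"
  using assms unfolding jidx_def by auto

lemma jidx_strict_mono:
  assumes "1 \<le> m"
  shows "strict_mono_on {0..length (jumps m a) + 1} (jidx m a)"
proof (rule monotone_onI)
  fix t t' assume t: "t \<in> {0..length (jumps m a) + 1}" and t': "t' \<in> {0..length (jumps m a) + 1}"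
    and "t < t'"
  show "jidx m a t < jidx m a t'"
  proof (cases "t = 0")
    case True
    then show ?thesis
      using \<open>t < t'\<close> t' jidx_in_jumps[of t' m a] assms by (auto simp: set_jumps jidx_def)
  next
    case False
    with \<open>t < t'\<close> t' have "jidx m a t \<in> set (jumps m a)" by (intro jidx_in_jumps) auto
    with False \<open>t < t'\<close> t' sorted_wrt_nth_less[OF sorted_jumps, of "t - 1" "t' - 1" m a]
    show ?thesis by (auto simp: set_jumps jidx_def)
  qed
qed

lemma jidx_range:
  assumes "1 \<le> m" "t \<in> {1..length (jumps m a) + 1}"
  shows "jidx m a t \<in> {1..m}"
proof -
  note mono = jidx_strict_mono[OF assms(1), of a]
  have "jidx m a 0 < jidx m a t" using assms(2) by (intro monotone_onD[OF mono]) auto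
  moreover have "jidx m a t \<le> jidx m a (length (jumps m a) + 1)"
    using assms(2) by (intro strict_mono_on_leD[OF mono]) auto
  ultimately show ?thesis by (simp add: jidx_def)
qed

lemma const_between_jumps:
  assumes "mono_on {1..m} a" "1 \<le> m" "\<rho> \<in> {1..length (jumps m a) + 1}"
  shows "a (1 + jidx m a (\<rho> - 1)) = a (jidx m a \<rho>)"
proof -
  let ?k = "length (jumps m a)"
  have mono: "strict_mono_on {0..?k + 1} (jidx m a)" using jidx_strict_mono[OF assms(2)] .
  have le: "1 + jidx m a (\<rho> - 1) \<le> jidx m a \<rho>"
    using monotone_onD[OF mono, of "\<rho> - 1" \<rho>] assms(3) by auto
  have flat: "a (Suc j) = a j" if "1 + jidx m a (\<rho> - 1) \<le> j" "j < jidx m a \<rho>" for j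
  proof -
    have "j \<notin> set (jumps m a)"
    proof
      assume "j \<in> set (jumps m a)"
      then obtain i where "i < ?k" "j = jumps m a ! i" by (auto simp: in_set_conv_nth)
      then have "Suc i \<in> {1..?k}" "jidx m a (Suc i) = j" by (auto simp: jidx_def)
      then obtain t where "t \<in> {1..?k}" "jidx m a t = j" by blast
      with that assms(3) have "\<rho> - 1 < t" "t < \<rho>"
        using strict_mono_on_less[OF mono, of "\<rho> - 1" t] strict_mono_on_less[OF mono, of t \<rho>]
        by auto
      then show False by simp
    qed
    moreover have "1 \<le> j" "Suc j \<le> m"
      using that jidx_range[OF assms(2,3)] by auto
    ultimately show ?thesis
      using monotone_onD[OF assms(1), of j "Suc j"] by (auto simp: set_jumps)
  qed
  have "a j = a (1 + jidx m a (\<rho> - 1))" if "1 + jidx m a (\<rho> - 1) \<le> j" "j \<le> jidx m a \<rho>" for j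
    using that
  proof (induction j rule: dec_induct)
    case (step j)
    then show ?case using flat[of j] by linarith
  qed simp
  from this[OF le order_refl] show ?thesis by simp
qed

lemma jumps_reflect:
  assumes reflect: "\<And>j. j \<in> {1..m} \<Longrightarrow> a (m + 1 - j) = n - a j"
    and bound: "\<And>j. j \<in> {1..m} \<Longrightarrow> a j \<le> n"
  shows "map (\<lambda>j. m - j) (rev (jumps m a)) = jumps m a"
proof (rule strict_sorted_equal[OF sorted_jumps])
  have "sorted_wrt (\<lambda>x y. m - y < m - x) (jumps m a)"
    by (rule sorted_wrt_mono_rel[OF _ sorted_jumps]) (auto simp: set_jumps)
  then show "sorted_wrt (<) (map (\<lambda>j. m - j) (rev (jumps m a)))"
    by (simp add: sorted_wrt_map sorted_wrt_rev)
  have mirror: "m - j \<in> set (jumps m a)" if "j \<in> set (jumps m a)" for j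
  proof -
    from that have j: "1 \<le> j" "j < m" "a j < a (Suc j)" by (auto simp: set_jumps)
    have "a (m - j) = n - a (Suc j)" using reflect[of "Suc j"] j by simp
    moreover have "a (Suc (m - j)) = n - a j" using reflect[of j] j by (simp add: Suc_diff_le)
    moreover have "a (Suc j) \<le> n" using bound[of "Suc j"] j by simp
    ultimately show ?thesis using j by (auto simp: set_jumps)
  qed
  have "j \<in> (\<lambda>j. m - j) ` set (jumps m a)" if "j \<in> set (jumps m a)" for j
    using that mirror[of j] by (intro image_eqI[of _ _ "m - j"]) (auto simp: set_jumps)
  with mirror show "set (map (\<lambda>j. m - j) (rev (jumps m a))) = set (jumps m a)" by auto
qed

lemma jidx_reflect:
  assumes "\<And>j. j \<in> {1..m} \<Longrightarrow> a (m + 1 - j) = n - a j"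
    and "\<And>j. j \<in> {1..m} \<Longrightarrow> a j \<le> n"
    and "\<rho> \<in> {1..length (jumps m a) + 1}"
  shows "jidx m a (length (jumps m a) + 2 - \<rho>) = m - jidx m a (\<rho> - 1)"
proof (cases "\<rho> = 1")
  case False
  let ?J = "jumps m a" and ?k = "length (jumps m a)"
  have "?J ! (?k - (\<rho> - 1)) = map (\<lambda>j. m - j) (rev ?J) ! (?k - (\<rho> - 1))"
    using jumps_reflect[of m a n] assms(1,2) by simp
  also have "\<dots> = m - ?J ! (\<rho> - 2)"
  proof -
    have "?k - (\<rho> - 1) < ?k" "?k - Suc (?k - (\<rho> - 1)) = \<rho> - 2" using False assms(3) by auto
    then show ?thesis by (simp add: rev_nth)
  qed
  moreover have "jidx m a (?k + 2 - \<rho>) = ?J ! (?k - (\<rho> - 1))"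
    "jidx m a (\<rho> - 1) = ?J ! (\<rho> - 2)"
    using False assms(3) by (auto simp: jidx_def Suc_diff_le numeral_2_eq_2)
  ultimately show ?thesis by simp
qed (simp add: jidx_def)

locale interlacing =
  fixes n m :: nat and mu nu :: "nat \<Rightarrow> int"
  assumes n_pos: "1 \<le> n" and m_pos: "1 \<le> m"
    and mu: "X0_plus n mu" and nu: "X0_plus m nu"
    and top: "lt m nu 1 < lt n mu 1"
    and disjoint: "\<forall>i\<in>{1..n}. \<forall>j\<in>{1..m}. lt n mu i \<noteq> lt m nu j"
begin

abbreviation a :: "nat \<Rightarrow> nat" where "a \<equiv> pos n (lt n mu) (lt m nu)"

abbreviation r :: nat where "r \<equiv> length (jumps m a) + 1"

lemma lt_mu_strict_antimono: "strict_antimono_on {1..n} (lt n mu)"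
  using lt_strict_antimono mu unfolding X0_plus_def by blast

lemma lt_mu_antimono: "antimono_on {1..n} (lt n mu)"
  using lt_mu_strict_antimono strict_antimono_iff_antimono by blast

lemma lt_nu_antimono: "antimono_on {1..m} (lt m nu)"
  using lt_strict_antimono nu strict_antimono_iff_antimono unfolding X0_plus_def by blast

lemma pos_interlaces:
  assumes "j \<in> {1..m}"
  shows "a j \<in> {1..n-1}" "lt m nu j < lt n mu (a j)" "lt n mu (1 + a j) < lt m nu j"
proof -
  have "lt m nu j \<le> lt m nu 1" "lt m nu m \<le> lt m nu j"
    using assms by (auto intro: monotone_onD[OF lt_nu_antimono])
  moreover have "lt n mu n = - lt n mu 1" "lt m nu m = - lt m nu 1"
    using lt_reflect[OF mu, of 1] lt_reflect[OF nu, of 1] n_pos m_pos by auto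
  ultimately have "lt m nu j < lt n mu 1" "lt n mu n \<le> lt m nu j" using top by auto
  with pos_spec[of n "lt n mu" "lt m nu" j] lt_mu_strict_antimono n_pos
  have "a j \<in> {1..n-1}" "lt m nu j < lt n mu (a j)" "lt n mu (1 + a j) \<le> lt m nu j" by auto
  moreover have "lt n mu (1 + a j) \<noteq> lt m nu j"
    using disjoint assms \<open>a j \<in> {1..n-1}\<close> by auto
  ultimately show "a j \<in> {1..n-1}" "lt m nu j < lt n mu (a j)" "lt n mu (1 + a j) < lt m nu j"
    by auto
qed

lemma pos_mono: "mono_on {1..m} a"
proof (rule monotone_onI, rule ccontr)
  fix j j' assume j: "j \<in> {1..m}" "j' \<in> {1..m}" "j \<le> j'" and "\<not> a j \<le> a j'"
  then have "lt n mu (a j) \<le> lt n mu (1 + a j')"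
    using pos_interlaces(1)[of j] pos_interlaces(1)[of j'] j
    by (intro monotone_onD[OF lt_mu_antimono]) auto
  moreover have "lt m nu j' \<le> lt m nu j"
    using j by (intro monotone_onD[OF lt_nu_antimono])
  ultimately show False using pos_interlaces[OF j(1)] pos_interlaces[OF j(2)] by auto
qed

lemma pos_reflect:
  assumes "j \<in> {1..m}"
  shows "a (m + 1 - j) = n - a j"
proof -
  note aj = pos_interlaces[OF assms]
  have "n + 1 - a j = 1 + (n - a j)" "n + 1 - (1 + a j) = n - a j" using aj(1) by auto
  then have "lt n mu (1 + (n - a j)) = - lt n mu (a j)" "lt n mu (n - a j) = - lt n mu (1 + a j)"
    using lt_reflect[OF mu, of "a j"] lt_reflect[OF mu, of "1 + a j"] aj(1) by auto
  moreover have "lt m nu (m + 1 - j) = - lt m nu j" using lt_reflect[OF nu assms] .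
  ultimately show ?thesis using aj by (intro pos_eq[OF lt_mu_strict_antimono]) auto
qed

lemma lam_antitone: "X_plus m (lam nu a)"
  \<comment> \<open>l'_j - l'_{j+1} = 2(nu_j - nu_{j+1}) + 2 exceeds the span of the values
      l_{1+a_j} > ... > l_{a_{j+1}} lying strictly between, which are spaced at least 2 apart.\<close>
proof (rule X_plusI_step)
  fix j assume j: "1 \<le> j" "j < m"
  then have j': "j \<in> {1..m}" "Suc j \<in> {1..m}" by auto
  have "a j \<le> a (Suc j)" using monotone_onD[OF pos_mono j'] by simp
  moreover have "nu (Suc j) \<le> nu j" using X_plusD[of m nu j "Suc j"] nu j unfolding X0_plus_def by simp
  moreover have "lt m nu j - lt m nu (Suc j) = 2 * (nu j - nu (Suc j)) + 2" unfolding lt_def by simp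
  moreover have "2 * (int (a (Suc j)) - int (1 + a j)) \<le> lt n mu (1 + a j) - lt n mu (a (Suc j))"
    if "a j < a (Suc j)"
    using that pos_interlaces(1)[OF j'(2)] mu unfolding X0_plus_def by (intro lt_diff_ge) auto
  ultimately show "lam nu a (Suc j) \<le> lam nu a j"
    using pos_interlaces(2,3)[OF j'(1)] pos_interlaces(2,3)[OF j'(2)]
    unfolding lam_def by (cases "a j = a (Suc j)") auto
qed

lemma lam_reflect:
  assumes "j \<in> {1..m}"
  shows "lam nu a j + lam nu a (m + 1 - j) = wt m nu + int n - int m - 1"
proof -
  have "int (n - a j) = int n - int (a j)" using pos_interlaces(1)[OF assms] by auto
  moreover have "int (m + 1 - j) = int m + 1 - int j" using assms by auto
  ultimately show ?thesis
    using X0_plus_reflect[OF nu assms] pos_reflect[OF assms] unfolding lam_def by simp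
qed

lemma pos_bounded: "j \<in> {1..m} \<Longrightarrow> a j \<le> n"
  using pos_interlaces(1) by force

lemma jidx_prev_less:
  assumes "\<rho> \<in> {1..r}"
  shows "jidx m a (\<rho> - 1) < jidx m a \<rho>"
  using assms by (intro monotone_onD[OF jidx_strict_mono[OF m_pos]]) auto

lemma pos_jidx_reflect:
  assumes "\<rho> \<in> {1..r}"
  shows "a (jidx m a (r + 1 - \<rho>)) = n - a (jidx m a \<rho>)"
proof -
  let ?j = "1 + jidx m a (\<rho> - 1)"
  have "?j \<in> {1..m}" using jidx_prev_less[OF assms] jidx_range[OF m_pos assms] by auto
  have "jidx m a (r + 1 - \<rho>) = m + 1 - ?j"
    using jidx_reflect[of m a n, OF pos_reflect pos_bounded assms] by simp
  then have "a (jidx m a (r + 1 - \<rho>)) = n - a ?j" using pos_reflect[OF \<open>?j \<in> {1..m}\<close>] by simp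
  also have "a ?j = a (jidx m a \<rho>)" using const_between_jumps[OF pos_mono m_pos assms] .
  finally show ?thesis .
qed

lemma pos_jidx_jump:
  assumes "1 \<le> \<rho>" "\<rho> < r"
  shows "1 + a (jidx m a \<rho>) \<le> a (jidx m a (\<rho> + 1))"
proof -
  have "jidx m a \<rho> \<in> set (jumps m a)" using assms by (intro jidx_in_jumps) auto
  then have "a (jidx m a \<rho>) < a (Suc (jidx m a \<rho>))" "1 \<le> jidx m a \<rho>"
    by (auto simp: set_jumps)
  moreover have "Suc (jidx m a \<rho>) \<le> jidx m a (\<rho> + 1)" "jidx m a (\<rho> + 1) \<le> m"
    using jidx_prev_less[of "\<rho> + 1"] jidx_range[OF m_pos, of "\<rho> + 1"] assms by auto
  ultimately show ?thesis using monotone_onD[OF pos_mono, of "Suc (jidx m a \<rho>)" "jidx m a (\<rho> + 1)"]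
    by auto
qed

lemma checkv_block_tuple:
  fixes u :: "nat \<Rightarrow> int"
  assumes "\<And>\<rho>. \<rho> \<in> {1..r} \<Longrightarrow> u (2*\<rho> - 1) = checkv n mu (a (jidx m a \<rho>))"
    and "\<And>\<rho>. \<rho> \<in> {1..r} \<Longrightarrow> u (2*\<rho>) = checkv n mu (1 + a (jidx m a \<rho>))"
  shows "X_plus (2*r) u" "\<forall>i\<in>{1..2*r}. u i + u (2*r + 1 - i) = - wt n mu"
proof -
  have A: "a (jidx m a \<rho>) \<in> {1..n-1}" if "\<rho> \<in> {1..r}" for \<rho>
    using pos_interlaces(1) jidx_range[OF m_pos that] by blast
  have X: "X_plus n mu" using mu unfolding X0_plus_def ..
  show "X_plus (2*r) u"
  proof (rule X_plus_by_pairs)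
    fix \<rho> assume "\<rho> \<in> {1..r}"
    with A[OF this] show "u (2*\<rho>) \<le> u (2*\<rho> - 1)"
      using assms checkv_antimono[OF X] by auto
  next
    fix \<rho> assume "1 \<le> \<rho>" "\<rho> < r"
    then show "u (2*\<rho> + 1) \<le> u (2*\<rho>)"
      using assms[of \<rho>] assms(1)[of "\<rho> + 1"] A[of "\<rho> + 1"] pos_jidx_jump checkv_antimono[OF X]
      by auto
  qed
  show "\<forall>i\<in>{1..2*r}. u i + u (2*r + 1 - i) = - wt n mu"
  proof (rule reflect_by_pairs)
    fix \<rho> assume \<rho>: "\<rho> \<in> {1..r}"
    then have "r + 1 - \<rho> \<in> {1..r}" by auto
    have "1 + a (jidx m a (r + 1 - \<rho>)) = n + 1 - a (jidx m a \<rho>)"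
      using A[OF \<rho>] pos_jidx_reflect[OF \<rho>] by auto
    with assms(2)[OF \<open>r + 1 - \<rho> \<in> {1..r}\<close>]
    have "u (2*(r + 1 - \<rho>)) = checkv n mu (n + 1 - a (jidx m a \<rho>))" by simp
    with A[OF \<rho>] show "u (2*\<rho> - 1) + u (2*(r + 1 - \<rho>)) = - wt n mu"
      using assms(1)[OF \<rho>] checkv_reflect[OF mu] by auto
  qed
qed

lemma lam_block_tuple:
  fixes v :: "nat \<Rightarrow> int" and s :: int
  assumes "\<And>\<rho>. \<rho> \<in> {1..r} \<Longrightarrow> v (2*\<rho> - 1) = lam nu a (1 + jidx m a (\<rho> - 1)) - s"
    and "\<And>\<rho>. \<rho> \<in> {1..r} \<Longrightarrow> v (2*\<rho>) = lam nu a (jidx m a \<rho>) - s"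
  shows "X_plus (2*r) v"
    "\<forall>i\<in>{1..2*r}. v i + v (2*r + 1 - i) = wt m nu + int n - int m - 1 - 2*s"
proof -
  have J: "1 + jidx m a (\<rho> - 1) \<le> jidx m a \<rho>" "jidx m a \<rho> \<in> {1..m}" if "\<rho> \<in> {1..r}" for \<rho>
    using jidx_prev_less[OF that] jidx_range[OF m_pos that] by auto
  show "X_plus (2*r) v"
  proof (rule X_plus_by_pairs)
    fix \<rho> assume "\<rho> \<in> {1..r}"
    with J[OF this] show "v (2*\<rho>) \<le> v (2*\<rho> - 1)"
      using assms X_plusD[OF lam_antitone] by auto
  next
    fix \<rho> assume "1 \<le> \<rho>" "\<rho> < r"
    with J[of \<rho>] J[of "\<rho> + 1"] show "v (2*\<rho> + 1) \<le> v (2*\<rho>)"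
      using assms[of \<rho>] assms(1)[of "\<rho> + 1"] X_plusD[OF lam_antitone] by auto
  qed
  show "\<forall>i\<in>{1..2*r}. v i + v (2*r + 1 - i) = wt m nu + int n - int m - 1 - 2*s"
  proof (rule reflect_by_pairs)
    fix \<rho> assume \<rho>: "\<rho> \<in> {1..r}"
    then have "r + 1 - \<rho> \<in> {1..r}" by auto
    have "jidx m a (r + 1 - \<rho>) = m + 1 - (1 + jidx m a (\<rho> - 1))"
      using jidx_reflect[of m a n, OF pos_reflect pos_bounded \<rho>] by simp
    with assms(2)[OF \<open>r + 1 - \<rho> \<in> {1..r}\<close>]
    have "v (2*(r + 1 - \<rho>)) = lam nu a (m + 1 - (1 + jidx m a (\<rho> - 1))) - s" by simp
    with J[OF \<rho>] show "v (2*\<rho> - 1) + v (2*(r + 1 - \<rho>)) = wt m nu + int n - int m - 1 - 2*s"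
      using assms(1)[OF \<rho>] lam_reflect[of "1 + jidx m a (\<rho> - 1)"] by auto
  qed
qed

end

theorem lemma5p1:
  fixes n m :: nat and mu nu :: "nat \<Rightarrow> int" and s :: int and u v :: "nat \<Rightarrow> int"
  assumes "n \<ge> 1" and "m \<ge> 1" and "\<not> (n = 1 \<and> m = 1)" and "\<not> (odd n \<and> odd m)"
    and "X0_plus n mu" and "X0_plus m nu"
    and "lt n mu 1 > lt m nu 1"
    and "\<forall>i\<in>{1..n}. \<forall>j\<in>{1..m}. lt n mu i \<noteq> lt m nu j"
  defines "a \<equiv> pos n (lt n mu) (lt m nu)"
  defines "r \<equiv> length (jumps m a) + 1"
  assumes "\<forall>rho\<in>{1..r}.
      u (2*rho - 1) = checkv n mu (a (jidx m a rho)) \<and>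
      u (2*rho) = checkv n mu (1 + a (jidx m a rho)) \<and>
      v (2*rho - 1) = lam nu a (1 + jidx m a (rho - 1)) - s \<and>
      v (2*rho) = lam nu a (jidx m a rho) - s"
  shows "X0_plus (2*r) u \<and> X0_plus (2*r) v
    \<and> (\<forall>i\<in>{1..2*r}. u i + u (2*r + 1 - i) = - wt n mu)
    \<and> (\<forall>i\<in>{1..2*r}. v i + v (2*r + 1 - i) = wt m nu + int n - int m - 1 - 2*s)"
proof -
  interpret interlacing n m mu nu
    using assms(1,2,5-8) by unfold_locales auto
  have u: "X_plus (2*r) u" "\<forall>i\<in>{1..2*r}. u i + u (2*r + 1 - i) = - wt n mu"
    using checkv_block_tuple[of u] assms(11) unfolding a_def r_def by blast+
  have v: "X_plus (2*r) v"
    "\<forall>i\<in>{1..2*r}. v i + v (2*r + 1 - i) = wt m nu + int n - int m - 1 - 2*s"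
    using lam_block_tuple[of v s] assms(11) unfolding a_def r_def by blast+
  from u v show ?thesis unfolding X0_plus_def by blast
qed

end
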